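(* There exists a constant $C>0$ such that for every sufficiently large $n$ and any two $n$-vertex $3$-uniform generalised hedgehogs $H,H'$ we have \[R(H,H')\le C n^{3/2}.\]
   Context: A $3$-graph is a $3$-uniform hypergraph. For $3$-graphs $G,H$, the ($2$-colour) Ramsey number $R(G,H)$ is the least $N$ such that every colouring of the edges of the complete $3$-graph on $N$ vertices with red and blue contains a blue copy of $G$ or a red copy of $H$. A (generalised) hedgehog is a $3$-graph on vertex set $B\sqcup S$ ($B$ the body, $S$ the spikes) in which every edge consists of one spike and two body vertices, and every spike lies in exactly one edge (different spikes may be attached to the same pair of body vertices, and some pairs of body vertices may have no spike). *)

theory Defs
  imports Complex_Main
begin

definition three_graph :: "'a set \<Rightarrow> 'a set set \<Rightarrow> bool" where
  "three_graph V E \<longleftrightarrow> finite V \<and> (\<forall>e\<in>E. e \<subseteq> V \<and> card e = 3)"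

definition gen_hedgehog :: "'a set \<Rightarrow> 'a set set \<Rightarrow> bool" where
  "gen_hedgehog V E \<longleftrightarrow> three_graph V E \<and>
     (\<exists>B S. B \<inter> S = {} \<and> B \<union> S = V \<and>
        (\<forall>e\<in>E. card (e \<inter> S) = 1 \<and> card (e \<inter> B) = 2) \<and>
        (\<forall>s\<in>S. \<exists>!e. e \<in> E \<and> s \<in> e))"

text \<open>A red/blue colouring of the complete 3-graph on {0..<N} is a map c from sets to bool
  (only its values on 3-subsets of {0..<N} matter); c e = True means e is red,
  c e = False means e is blue.\<close>
definition has_copy :: "nat \<Rightarrow> (nat set \<Rightarrow> bool) \<Rightarrow> bool \<Rightarrow> 'a set \<Rightarrow> 'a set set \<Rightarrow> bool" where
  "has_copy N c col V E \<longleftrightarrow>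
     (\<exists>f. inj_on f V \<and> f ` V \<subseteq> {0..<N} \<and> (\<forall>e\<in>E. c (f ` e) = col))"

definition ramsey3 :: "'a set \<Rightarrow> 'a set set \<Rightarrow> 'b set \<Rightarrow> 'b set set \<Rightarrow> nat" where
  "ramsey3 V E V' E' = (LEAST N. \<forall>c. has_copy N c False V E \<or> has_copy N c True V' E')"

end

theory Submission
  imports Defs
begin

(* Call y a poor partner of x in a colour if fewer than n triples {x,y,z} have that colour.
   If x had 2n poor blue partners P and 2n poor red partners Q, then of the 4n^2 triples
   {x,y,z} with y in P and z in Q at most 2n(n-1) could be blue and at most 2n(n-1) red.  So
   every vertex has fewer than 2n poor partners in some colour, and for N = 2(n + 2dn) + 2 one
   colour has more than n + 2dn vertices of this kind.  The body graph of an n-vertex hedgehog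
   has at most n edges, hence is d-degenerate for d = floor (sqrt (2n)), and embeds greedily
   into these vertices with no spiked pair sent to poor partners.  Every image pair then lies
   in at least n triples of the colour, enough to place all spikes greedily on distinct
   vertices.  As d is about sqrt (2n), this gives N = O(n^(3/2)). *)

lemma greedy_distinct_representatives:
  assumes "finite S" "finite X"
    and "\<forall>s\<in>S. finite (A s) \<and> card S + card X \<le> card (A s)"
  shows "\<exists>h. inj_on h S \<and> (\<forall>s\<in>S. h s \<in> A s - X)"
  using assms
proof (induction S rule: finite_induct)
  case empty
  then show ?case by simp
next
  case (insert s S)
  then obtain h where h: "inj_on h S" "\<forall>t\<in>S. h t \<in> A t - X"
    by fastforce
  have "card (X \<union> h ` S) \<le> card X + card S"
    by (meson add_left_mono card_Un_le card_image_le insert.hyps(1) order_trans)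
  also have "\<dots> < card (A s)"
    using insert.hyps insert.prems(2) by simp
  finally have "\<not> A s \<subseteq> X \<union> h ` S"
    using insert.hyps(1) insert.prems(1) by (meson card_mono finite_UnI finite_imageI not_le)
  then obtain w where w: "w \<in> A s" "w \<notin> X \<union> h ` S"
    by blast
  have "inj_on (h(s := w)) (insert s S)"
    using h(1) w(2) insert.hyps(2) by (auto simp: inj_on_def)
  moreover have "\<forall>t\<in>insert s S. (h(s := w)) t \<in> A t - X"
    using h(2) w insert.hyps(2) by auto
  ultimately show ?case
    by blast
qed

definition degenerate :: "nat \<Rightarrow> 'a set set \<Rightarrow> 'a set \<Rightarrow> bool" where
  "degenerate d G T \<longleftrightarrow> (\<forall>T'\<subseteq>T. T' \<noteq> {} \<longrightarrow> (\<exists>v\<in>T'. card {u\<in>T'. {v,u} \<in> G} \<le> d))"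

lemma degree_sum_le_twice_card_edges:
  assumes "finite T" "finite G" "\<forall>e\<in>G. card e = 2"
  shows "(\<Sum>v\<in>T. card {u\<in>T. {v,u} \<in> G}) \<le> 2 * card G"
proof -
  have "card {u\<in>T. {v,u} \<in> G} \<le> card {e\<in>G. v \<in> e}" for v
  proof -
    have "inj_on (\<lambda>u. {v,u}) {u\<in>T. {v,u} \<in> G}"
      by (auto simp: inj_on_def doubleton_eq_iff)
    moreover have "(\<lambda>u. {v,u}) ` {u\<in>T. {v,u} \<in> G} \<subseteq> {e\<in>G. v \<in> e}"
      by auto
    ultimately show ?thesis
      using assms(2) by (simp add: card_inj_on_le)
  qed
  then have "(\<Sum>v\<in>T. card {u\<in>T. {v,u} \<in> G}) \<le> (\<Sum>v\<in>T. card {e\<in>G. v \<in> e})"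
    by (rule sum_mono)
  also have "\<dots> = (\<Sum>e\<in>G. card {v\<in>T. v \<in> e})"
    by (rule sum_multicount_gen) (use assms in auto)
  also have "\<dots> \<le> (\<Sum>e\<in>G. card e)"
  proof (rule sum_mono)
    fix e assume "e \<in> G"
    then have "finite e"
      using assms(3) by (metis card.infinite zero_neq_numeral)
    then show "card {v\<in>T. v \<in> e} \<le> card e"
      by (auto intro: card_mono)
  qed
  also have "\<dots> = 2 * card G"
    using assms(3) by simp
  finally show ?thesis .
qed

lemma few_edges_degenerate:
  assumes "finite T" "finite G" "\<forall>e\<in>G. card e = 2" "2 * card G < (d+1) * (d+2)"
  shows "degenerate d G T"
  unfolding degenerate_def
proof (intro allI impI)
  fix T' assume T': "T' \<subseteq> T" "T' \<noteq> {}"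
  have "finite T'"
    using T'(1) assms(1) finite_subset by blast
  show "\<exists>v\<in>T'. card {u\<in>T'. {v,u} \<in> G} \<le> d"
  proof (rule ccontr)
    assume "\<not> ?thesis"
    then have high: "d < card {u\<in>T'. {v,u} \<in> G}" if "v \<in> T'" for v
      using that by (simp add: not_le)
    obtain v where "v \<in> T'"
      using T'(2) by blast
    have "{u\<in>T'. {v,u} \<in> G} \<subseteq> T' - {v}"
      using assms(3) by (auto simp: card_insert_if)
    then have "card {u\<in>T'. {v,u} \<in> G} < card T'"
      using \<open>finite T'\<close> \<open>v \<in> T'\<close> by (meson card_Diff1_less card_mono finite_Diff le_less_trans)
    then have "d + 2 \<le> card T'"
      using high[OF \<open>v \<in> T'\<close>] by linarith
    then have "(d+2) * (d+1) \<le> card T' * (d+1)"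
      by (rule mult_le_mono1)
    also have "\<dots> = (\<Sum>v\<in>T'. d + 1)"
      by simp
    also have "\<dots> \<le> (\<Sum>v\<in>T'. card {u\<in>T'. {v,u} \<in> G})"
      by (rule sum_mono) (simp add: Suc_le_eq high)
    also have "\<dots> \<le> 2 * card G"
      using degree_sum_le_twice_card_edges \<open>finite T'\<close> assms(2,3) .
    finally show False
      using assms(4) by (simp add: mult.commute)
  qed
qed

definition graph_embedding ::
    "'a set set \<Rightarrow> 'a set \<Rightarrow> ('b \<Rightarrow> 'b \<Rightarrow> bool) \<Rightarrow> 'b set \<Rightarrow> ('a \<Rightarrow> 'b) \<Rightarrow> bool" where
  "graph_embedding G T R U g \<longleftrightarrow>
     inj_on g T \<and> g ` T \<subseteq> U \<and> (\<forall>u\<in>T. \<forall>v\<in>T. {u,v} \<in> G \<longrightarrow> R (g u) (g v))"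

lemma graph_embedding_insert:
  assumes g: "graph_embedding G T R U g" and "v \<notin> T" "w \<in> U" "w \<notin> g ` T"
    and "symp R" "\<forall>e\<in>G. card e = 2" and R_w: "\<And>u. u \<in> T \<Longrightarrow> {v,u} \<in> G \<Longrightarrow> R (g u) w"
  shows "graph_embedding G (insert v T) R U (g(v := w))"
  unfolding graph_embedding_def
proof (intro conjI ballI impI)
  have same: "(g(v := w)) ` T = g ` T"
    using \<open>v \<notin> T\<close> by auto
  show "inj_on (g(v := w)) (insert v T)"
    using g \<open>v \<notin> T\<close> \<open>w \<notin> g ` T\<close> same unfolding graph_embedding_def
    by (simp add: inj_on_fun_updI)
  show "(g(v := w)) ` insert v T \<subseteq> U"
    using g \<open>w \<in> U\<close> \<open>v \<notin> T\<close> unfolding graph_embedding_def by auto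
  fix u x assume ux: "u \<in> insert v T" "x \<in> insert v T" "{u,x} \<in> G"
  have "u \<noteq> x"
    using ux(3) assms(6) by force
  then consider "u = v" "x \<in> T" | "x = v" "u \<in> T" | "u \<in> T" "x \<in> T"
    using ux(1,2) by blast
  then show "R ((g(v := w)) u) ((g(v := w)) x)"
  proof cases
    case 1
    then show ?thesis
      using R_w[of x] ux(3) \<open>v \<notin> T\<close> \<open>symp R\<close> by (auto dest: sympD)
  next
    case 2
    then show ?thesis
      using R_w[of u] ux(3) \<open>v \<notin> T\<close> by (auto simp: insert_commute)
  next
    case 3
    then show ?thesis
      using g ux(3) \<open>v \<notin> T\<close> unfolding graph_embedding_def by auto
  qed
qed

lemma graph_embedding_extend:
  assumes g: "graph_embedding G T R U g" and "finite T" "v \<notin> T" "card {u\<in>T. {v,u} \<in> G} \<le> d"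
    and "\<forall>e\<in>G. card e = 2" "finite U" "symp R"
    and few_bad: "\<forall>x\<in>U. card {y\<in>U. y \<noteq> x \<and> \<not> R x y} \<le> D"
    and "card T + d * D < card U"
  shows "\<exists>w. graph_embedding G (insert v T) R U (g(v := w))"
proof -
  define Nb where "Nb = {u\<in>T. {v,u} \<in> G}"
  define Bad where "Bad = (\<Union>u\<in>Nb. {y\<in>U. y \<noteq> g u \<and> \<not> R (g u) y})"
  have "card Bad \<le> (\<Sum>u\<in>Nb. D)"
    unfolding Bad_def
  proof (rule order_trans[OF card_UN_le sum_mono])
    show "finite Nb"
      using \<open>finite T\<close> by (simp add: Nb_def)
    show "card {y\<in>U. y \<noteq> g u \<and> \<not> R (g u) y} \<le> D" if "u \<in> Nb" for u
      using few_bad g that unfolding graph_embedding_def Nb_def by blast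
  qed
  also have "\<dots> \<le> d * D"
    using assms(4) by (simp add: Nb_def)
  finally have "card (g ` T \<union> Bad) < card U"
    using card_Un_le[of "g ` T" Bad] card_image_le[OF \<open>finite T\<close>, of g] assms(9) by linarith
  moreover have "finite (g ` T \<union> Bad)"
    using \<open>finite T\<close> \<open>finite U\<close> by (simp add: Bad_def Nb_def)
  ultimately have "\<not> U \<subseteq> g ` T \<union> Bad"
    using card_mono[of "g ` T \<union> Bad" U] by linarith
  then obtain w where w: "w \<in> U" "w \<notin> g ` T" "w \<notin> Bad"
    by blast
  have "R (g u) w" if "u \<in> T" "{v,u} \<in> G" for u
    using w that by (auto simp: Bad_def Nb_def)
  then show ?thesis
    using graph_embedding_insert[OF g \<open>v \<notin> T\<close> w(1,2) assms(7,5)] by blast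
qed

lemma degenerate_graph_embedding:
  assumes "finite T" "degenerate d G T" "\<forall>e\<in>G. card e = 2"
    and "finite U" "symp R" "\<forall>x\<in>U. card {y\<in>U. y \<noteq> x \<and> \<not> R x y} \<le> D"
    and "card T + d * D < card U"
  shows "\<exists>g. graph_embedding G T R U g"
  using assms(1,2,7)
proof (induction T rule: finite_psubset_induct)
  case (psubset T)
  show ?case
  proof (cases "T = {}")
    case True
    then show ?thesis
      by (simp add: graph_embedding_def)
  next
    case False
    then obtain v where v: "v \<in> T" "card {u\<in>T. {v,u} \<in> G} \<le> d"
      using psubset.prems(1) unfolding degenerate_def by blast
    define T0 where "T0 = T - {v}"
    have "T0 \<subset> T" "v \<notin> T0" "finite T0" "T = insert v T0"
      using v(1) psubset.hyps by (auto simp: T0_def)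
    then have "card T0 + d * D < card U"
      using psubset.hyps psubset.prems(2) psubset_card_mono[of T T0] by linarith
    moreover have "degenerate d G T0"
      using psubset.prems(1) unfolding degenerate_def T0_def by blast
    ultimately obtain g where g: "graph_embedding G T0 R U g"
      using psubset.IH[OF \<open>T0 \<subset> T\<close>] by blast
    have "card {u\<in>T0. {v,u} \<in> G} \<le> card {u\<in>T. {v,u} \<in> G}"
      by (rule card_mono) (use psubset.hyps in \<open>auto simp: T0_def\<close>)
    with v(2) have "card {u\<in>T0. {v,u} \<in> G} \<le> d"
      by linarith
    then obtain w where "graph_embedding G (insert v T0) R U (g(v := w))"
      using graph_embedding_extend[OF g \<open>finite T0\<close> \<open>v \<notin> T0\<close> _ assms(3-6)]
        \<open>card T0 + d * D < card U\<close> by blast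
    then show ?thesis
      using \<open>T = insert v T0\<close> by blast
  qed
qed

lemma bipartite_count_le:
  assumes "finite P" "finite Q"
    and "\<forall>y\<in>P. card {z\<in>Q. R y z} \<le> a" "\<forall>z\<in>Q. card {y\<in>P. \<not> R y z} \<le> b"
  shows "card P * card Q \<le> card P * a + card Q * b"
proof -
  have split: "card Q = card {z\<in>Q. R y z} + card {z\<in>Q. \<not> R y z}" for y
    by (subst card_Un_disjoint[symmetric]) (use assms(2) in \<open>auto intro: arg_cong[where f = card]\<close>)
  have "card P * card Q = (\<Sum>y\<in>P. card {z\<in>Q. R y z}) + (\<Sum>y\<in>P. card {z\<in>Q. \<not> R y z})"
    by (simp flip: sum.distrib split)
  also have "(\<Sum>y\<in>P. card {z\<in>Q. \<not> R y z}) = (\<Sum>z\<in>Q. card {y\<in>P. \<not> R y z})"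
    by (rule sum_multicount_gen) (use assms(1,2) in auto)
  also have "(\<Sum>y\<in>P. card {z\<in>Q. R y z}) \<le> card P * a"
    using sum_bounded_above[of P "\<lambda>y. card {z\<in>Q. R y z}" a] assms(3) by simp
  also have "(\<Sum>z\<in>Q. card {y\<in>P. \<not> R y z}) \<le> card Q * b"
    using sum_bounded_above[of Q "\<lambda>z. card {y\<in>P. \<not> R y z}" b] assms(4) by simp
  finally show ?thesis
    by simp
qed

definition codegree :: "(nat set \<Rightarrow> bool) \<Rightarrow> nat \<Rightarrow> bool \<Rightarrow> nat \<Rightarrow> nat \<Rightarrow> nat" where
  "codegree c N col p q = card {z. z < N \<and> z \<noteq> p \<and> z \<noteq> q \<and> c {p,q,z} = col}"

definition poor_partners :: "(nat set \<Rightarrow> bool) \<Rightarrow> nat \<Rightarrow> bool \<Rightarrow> nat \<Rightarrow> nat \<Rightarrow> nat set" where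
  "poor_partners c N col n x = {y. y < N \<and> y \<noteq> x \<and> codegree c N col x y < n}"

lemma finite_poor_partners: "finite (poor_partners c N col n x)"
  unfolding poor_partners_def by simp

lemma codegree_eq_card:
  "codegree c N col p q = card {z. z < N \<and> z \<notin> {p,q} \<and> c (insert z {p,q}) = col}"
proof -
  have "insert z {p,q} = {p,q,z}" for z
    by blast
  then show ?thesis
    unfolding codegree_def by simp
qed

lemma codegree_commute: "codegree c N col p q = codegree c N col q p"
  unfolding codegree_def by (metis insert_commute)

lemma codegree_False_plus_True:
  assumes "x < N" "y < N" "x \<noteq> y"
  shows "codegree c N False x y + codegree c N True x y = N - 2"
proof -
  have "codegree c N False x y + codegree c N True x y = card ({0..<N} - {x,y})"
    unfolding codegree_def
    by (subst card_Un_disjoint[symmetric]) (auto intro!: arg_cong[where f = card])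
  also have "\<dots> = N - 2"
    using assms by (subst card_Diff_subset) auto
  finally show ?thesis .
qed

lemma poor_partners_disjoint:
  assumes "x < N" "2*n + 2 \<le> N"
  shows "poor_partners c N False n x \<inter> poor_partners c N True n x = {}"
proof (rule equals0I)
  fix y assume "y \<in> poor_partners c N False n x \<inter> poor_partners c N True n x"
  then have "codegree c N False x y + codegree c N True x y < 2*n" "y < N" "y \<noteq> x"
    unfolding poor_partners_def by auto
  then show False
    using codegree_False_plus_True[OF assms(1)] assms(2) by fastforce
qed

lemma poor_partners_small_in_some_colour:
  assumes "x < N" "2*n + 2 \<le> N" "0 < n"
  shows "card (poor_partners c N False n x) < 2*n \<or> card (poor_partners c N True n x) < 2*n"
proof (rule ccontr)
  assume "\<not> ?thesis"
  then obtain P Q where P: "P \<subseteq> poor_partners c N False n x" "card P = 2*n"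
    and Q: "Q \<subseteq> poor_partners c N True n x" "card Q = 2*n"
    by (meson not_le obtain_subset_with_card_n)
  have fin: "finite P" "finite Q"
    using P(1) Q(1) finite_poor_partners by (auto intro: finite_subset)
  have "y \<notin> Q" if "y \<in> P" for y
    using poor_partners_disjoint[OF assms(1,2)] P(1) Q(1) that by blast
  have "card {z\<in>Q. c {x,y,z} = False} \<le> n - 1" if "y \<in> P" for y
  proof -
    have "card {z\<in>Q. c {x,y,z} = False} \<le> codegree c N False x y"
      unfolding codegree_def
      by (rule card_mono) (use that Q(1) \<open>y \<in> P \<Longrightarrow> y \<notin> Q\<close> in \<open>auto simp: poor_partners_def\<close>)
    moreover have "codegree c N False x y < n"
      using that P(1) unfolding poor_partners_def by blast
    ultimately show ?thesis
      by linarith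
  qed
  moreover have "card {y\<in>P. \<not> c {x,y,z} = False} \<le> n - 1" if "z \<in> Q" for z
  proof -
    have "card {y\<in>P. \<not> c {x,y,z} = False} \<le> codegree c N True x z"
      unfolding codegree_def
      by (rule card_mono) (use that P(1) \<open>\<And>y. y \<in> P \<Longrightarrow> y \<notin> Q\<close> in
          \<open>auto simp: poor_partners_def insert_commute\<close>)
    moreover have "codegree c N True x z < n"
      using that Q(1) unfolding poor_partners_def by blast
    ultimately show ?thesis
      by linarith
  qed
  ultimately have "2*n * (2*n) \<le> 2*n * (n - 1) + 2*n * (n - 1)"
    using bipartite_count_le[OF fin, of "\<lambda>y z. c {x,y,z} = False" "n - 1" "n - 1"] P(2) Q(2)
    by simp
  also have "\<dots> = 2*n * (2*(n - 1))"
    by (simp only: mult_2 distrib_left)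
  finally show False
    using assms(3) by simp
qed

definition body_spike_partition :: "'a set \<Rightarrow> 'a set set \<Rightarrow> 'a set \<Rightarrow> 'a set \<Rightarrow> bool" where
  "body_spike_partition V E B S \<longleftrightarrow> B \<inter> S = {} \<and> B \<union> S = V \<and>
     (\<forall>e\<in>E. card (e \<inter> S) = 1 \<and> card (e \<inter> B) = 2) \<and> (\<forall>s\<in>S. \<exists>!e. e \<in> E \<and> s \<in> e)"

lemma gen_hedgehog_iff:
  "gen_hedgehog V E \<longleftrightarrow> three_graph V E \<and> (\<exists>B S. body_spike_partition V E B S)"
  by (simp add: gen_hedgehog_def body_spike_partition_def)

lemma body_spike_partition_edge_spike:
  assumes "body_spike_partition V E B S" "e \<in> E"
  obtains s where "s \<in> S" "e \<inter> S = {s}"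
proof -
  have "card (e \<inter> S) = 1"
    using assms unfolding body_spike_partition_def by blast
  then obtain s where "e \<inter> S = {s}"
    by (metis One_nat_def card_1_singleton_iff)
  then show ?thesis
    using that by blast
qed

lemma body_spike_partition_edge_eq:
  assumes "body_spike_partition V E B S" "s \<in> S" "e \<in> E" "s \<in> e"
  shows "(THE e. e \<in> E \<and> s \<in> e) = e"
  using assms unfolding body_spike_partition_def by (simp add: the1_equality)

lemma card_edges_le_card_spikes:
  assumes "body_spike_partition V E B S" "finite S"
  shows "card E \<le> card S"
proof (rule surj_card_le[OF assms(2)])
  show "E \<subseteq> (\<lambda>s. THE e. e \<in> E \<and> s \<in> e) ` S"
  proof
    fix e assume "e \<in> E"
    then obtain s where "s \<in> S" "s \<in> e"
      using body_spike_partition_edge_spike[OF assms(1)] by blast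
    then show "e \<in> (\<lambda>s. THE e. e \<in> E \<and> s \<in> e) ` S"
      using body_spike_partition_edge_eq[OF assms(1)] \<open>e \<in> E\<close>
      by (intro image_eqI[of e _ s]) simp_all
  qed
qed

lemma body_graph_degenerate:
  assumes "three_graph V E" "body_spike_partition V E B S" "2 * card V < (d+1) * (d+2)"
  shows "degenerate d ((\<lambda>e. e \<inter> B) ` E) B"
proof (rule few_edges_degenerate)
  have "finite V" "B \<union> S = V" "B \<inter> S = {}" "E \<subseteq> Pow V"
    using assms(1,2) unfolding three_graph_def body_spike_partition_def by auto
  then have "finite B" "finite S" "finite E"
    by (auto intro: finite_subset[of E "Pow V"])
  then show "finite B" "finite ((\<lambda>e. e \<inter> B) ` E)"
    by simp_all
  show "\<forall>e\<in>(\<lambda>e. e \<inter> B) ` E. card e = 2"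
    using assms(2) unfolding body_spike_partition_def by auto
  have "card ((\<lambda>e. e \<inter> B) ` E) \<le> card S"
    using card_image_le[OF \<open>finite E\<close>] card_edges_le_card_spikes[OF assms(2) \<open>finite S\<close>]
    by (rule le_trans)
  also have "\<dots> \<le> card V"
    by (rule card_mono) (use \<open>finite V\<close> \<open>B \<union> S = V\<close> in auto)
  finally show "2 * card ((\<lambda>e. e \<inter> B) ` E) < (d+1) * (d+2)"
    using assms(3) by linarith
qed

lemma has_copy_from_body_and_spike_maps:
  assumes "three_graph V E" "body_spike_partition V E B S"
    and "inj_on g B" "inj_on h S" "g ` B \<inter> h ` S = {}" "g ` B \<subseteq> {0..<N}" "h ` S \<subseteq> {0..<N}"
    and coloured: "\<forall>e\<in>E. \<forall>s\<in>e \<inter> S. c (insert (h s) (g ` (e \<inter> B))) = col"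
  shows "has_copy N c col V E"
proof -
  have BS: "B \<inter> S = {}" "B \<union> S = V"
    using assms(2) unfolding body_spike_partition_def by auto
  define f where "f v = (if v \<in> B then g v else h v)" for v
  have f_B: "f ` B = g ` B" and f_S: "f ` S = h ` S"
    using BS(1) by (auto simp: f_def)
  show ?thesis
    unfolding has_copy_def
  proof (intro exI conjI ballI)
    have "inj_on f B = inj_on g B"
      by (rule inj_on_cong) (simp add: f_def)
    moreover have "inj_on f S = inj_on h S"
      by (rule inj_on_cong) (use BS(1) in \<open>auto simp: f_def\<close>)
    moreover have "f ` B \<inter> f ` S = {}"
      unfolding f_B f_S by (rule assms(5))
    ultimately show "inj_on f V"
      using assms(3,4) BS(1) unfolding BS(2)[symmetric] inj_on_Un
      by (simp add: Diff_triv inf_commute)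
    show "f ` V \<subseteq> {0..<N}"
      unfolding BS(2)[symmetric] image_Un f_B f_S using assms(6,7) by blast
  next
    fix e assume "e \<in> E"
    then obtain s where s: "s \<in> S" "e \<inter> S = {s}"
      using body_spike_partition_edge_spike[OF assms(2)] by blast
    have "e \<subseteq> V"
      using assms(1) \<open>e \<in> E\<close> unfolding three_graph_def by blast
    then have "e = insert s (e \<inter> B)"
      using s(2) BS(2) by blast
    then have "f ` e = f ` insert s (e \<inter> B)"
      by (rule arg_cong)
    also have "\<dots> = insert (h s) (g ` (e \<inter> B))"
      using s(1) BS(1) by (auto simp: f_def)
    finally show "c (f ` e) = col"
      using coloured \<open>e \<in> E\<close> s(2) by auto
  qed
qed

lemma has_copy_from_body_embedding:
  assumes "three_graph V E" "body_spike_partition V E B S"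
    and "inj_on g B" "g ` B \<subseteq> {0..<N}"
    and rich: "\<forall>e\<in>E. card V \<le> card {z. z < N \<and> z \<notin> g ` (e \<inter> B) \<and> c (insert z (g ` (e \<inter> B))) = col}"
  shows "has_copy N c col V E"
proof -
  have "finite V" "B \<inter> S = {}" "B \<union> S = V"
    using assms(1,2) unfolding three_graph_def body_spike_partition_def by auto
  then have "finite B" "finite S" "card B + card S = card V"
    by (auto simp flip: card_Un_disjoint)
  define es where "es s = (THE e. e \<in> E \<and> s \<in> e)" for s
  have "\<forall>s\<in>S. \<exists>!e. e \<in> E \<and> s \<in> e"
    using assms(2) unfolding body_spike_partition_def by blast
  then have es: "es s \<in> E" "s \<in> es s" if "s \<in> S" for s
    using theI'[of "\<lambda>e. e \<in> E \<and> s \<in> e"] that unfolding es_def by blast+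
  define A where
    "A s = {z. z < N \<and> z \<notin> g ` (es s \<inter> B) \<and> c (insert z (g ` (es s \<inter> B))) = col}" for s
  have "card S + card (g ` B) \<le> card (A s)" if "s \<in> S" for s
    using rich es(1)[OF that] card_image_le[OF \<open>finite B\<close>, of g] \<open>card B + card S = card V\<close>
    unfolding A_def by force
  moreover have "finite (A s)" for s
    by (simp add: A_def)
  ultimately obtain h where h: "inj_on h S" "\<forall>s\<in>S. h s \<in> A s - g ` B"
    using greedy_distinct_representatives[OF \<open>finite S\<close>, of "g ` B" A] \<open>finite B\<close> by blast
  show ?thesis
  proof (rule has_copy_from_body_and_spike_maps[OF assms(1-3) h(1) _ assms(4)])
    show "h ` S \<subseteq> {0..<N}"
      using h(2) by (auto simp: A_def)
    show "g ` B \<inter> h ` S = {}"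
    proof (rule equals0I)
      fix y assume "y \<in> g ` B \<inter> h ` S"
      then obtain s where "s \<in> S" "y = h s" "y \<in> g ` B"
        by blast
      then show False
        using h(2)[rule_format, OF \<open>s \<in> S\<close>] by simp
    qed
    show "\<forall>e\<in>E. \<forall>s\<in>e \<inter> S. c (insert (h s) (g ` (e \<inter> B))) = col"
    proof (intro ballI)
      fix e s assume "e \<in> E" "s \<in> e \<inter> S"
      then have "es s = e"
        unfolding es_def using body_spike_partition_edge_eq[OF assms(2)] by blast
      then show "c (insert (h s) (g ` (e \<inter> B))) = col"
        using h(2) \<open>s \<in> e \<inter> S\<close> by (auto simp: A_def)
    qed
  qed
qed

lemma has_copy_if_few_poor_partners:
  assumes "gen_hedgehog V E" "card V = n" "U \<subseteq> {0..<N}"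
    and poor: "\<forall>x\<in>U. card (poor_partners c N col n x) < 2*n"
    and "2*n < (d+1) * (d+2)" "n + d * (2*n) < card U"
  shows "has_copy N c col V E"
proof -
  obtain B S where "three_graph V E" and BS: "body_spike_partition V E B S"
    using assms(1) gen_hedgehog_iff by blast
  then have "finite V" "B \<union> S = V" "B \<inter> S = {}" and pairs: "\<forall>e\<in>E. card (e \<inter> B) = 2"
    unfolding three_graph_def body_spike_partition_def by auto
  then have "finite B" "card B \<le> n"
    using assms(2) by (auto intro: card_mono)
  define R where "R p q \<longleftrightarrow> n \<le> codegree c N col p q" for p q
  have "symp R"
    by (rule sympI) (simp add: R_def codegree_commute)
  moreover have "\<forall>x\<in>U. card {y\<in>U. y \<noteq> x \<and> \<not> R x y} \<le> 2*n"
  proof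
    fix x assume "x \<in> U"
    have "{y\<in>U. y \<noteq> x \<and> \<not> R x y} \<subseteq> poor_partners c N col n x"
      using assms(3) by (auto simp: R_def poor_partners_def)
    then show "card {y\<in>U. y \<noteq> x \<and> \<not> R x y} \<le> 2*n"
      using poor \<open>x \<in> U\<close> card_mono[OF finite_poor_partners] by (meson less_imp_le order_trans)
  qed
  moreover have "card B + d * (2*n) < card U" "finite U"
    using assms(3,6) \<open>card B \<le> n\<close> finite_subset by auto
  moreover have "degenerate d ((\<lambda>e. e \<inter> B) ` E) B"
    using body_graph_degenerate[OF \<open>three_graph V E\<close> BS] assms(2,5) by simp
  ultimately obtain g where g: "graph_embedding ((\<lambda>e. e \<inter> B) ` E) B R U g"
    using degenerate_graph_embedding[OF \<open>finite B\<close>] pairs by blast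
  show ?thesis
  proof (rule has_copy_from_body_embedding[OF \<open>three_graph V E\<close> BS])
    show "inj_on g B" "g ` B \<subseteq> {0..<N}"
      using g assms(3) unfolding graph_embedding_def by auto
    show "\<forall>e\<in>E. card V \<le> card {z. z < N \<and> z \<notin> g ` (e \<inter> B) \<and> c (insert z (g ` (e \<inter> B))) = col}"
    proof
      fix e assume "e \<in> E"
      then obtain x y where xy: "e \<inter> B = {x,y}"
        using pairs by (meson card_2_iff)
      then have "n \<le> codegree c N col (g x) (g y)"
        using g \<open>e \<in> E\<close> unfolding graph_embedding_def R_def by blast
      also have "\<dots> = card {z. z < N \<and> z \<notin> g ` (e \<inter> B) \<and> c (insert z (g ` (e \<inter> B))) = col}"
        unfolding codegree_eq_card xy by simp
      finally show "card V \<le> \<dots>"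
        using assms(2) by simp
    qed
  qed
qed

lemma ramsey3_gen_hedgehogs_le:
  assumes "gen_hedgehog V E" "card V = n" "gen_hedgehog V' E'" "card V' = n"
    and "0 < n" "2*n < (d+1) * (d+2)"
  shows "ramsey3 V E V' E' \<le> 2 * (n + d * (2*n)) + 2"
proof -
  define M where "M = n + d * (2*n)"
  define N where "N = 2 * M + 2"
  have "has_copy N c False V E \<or> has_copy N c True V' E'" for c
  proof -
    define U where "U col = {x\<in>{0..<N}. card (poor_partners c N col n x) < 2*n}" for col
    have "2*n + 2 \<le> N"
      by (simp add: N_def M_def)
    then have "{0..<N} \<subseteq> U False \<union> U True"
      using poor_partners_small_in_some_colour[of _ N n c] assms(5) unfolding U_def by fastforce
    then have "card {0..<N} \<le> card (U False \<union> U True)"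
      by (rule card_mono[rotated]) (simp add: U_def)
    then have "N \<le> card (U False) + card (U True)"
      using card_Un_le[of "U False" "U True"] by simp
    then consider "n + d * (2*n) < card (U False)" | "n + d * (2*n) < card (U True)"
      unfolding N_def M_def[symmetric] by linarith
    then show ?thesis
    proof cases
      case 1
      have "has_copy N c False V E"
        by (rule has_copy_if_few_poor_partners[OF assms(1,2) _ _ assms(6) 1]) (auto simp: U_def)
      then show ?thesis ..
    next
      case 2
      have "has_copy N c True V' E'"
        by (rule has_copy_if_few_poor_partners[OF assms(3,4) _ _ assms(6) 2]) (auto simp: U_def)
      then show ?thesis ..
    qed
  qed
  then show ?thesis
    unfolding ramsey3_def N_def M_def by (intro Least_le) blast
qed

lemma floor_sqrt_degeneracy:
  fixes n :: nat
  defines "d \<equiv> nat \<lfloor>sqrt (2 * real n)\<rfloor>"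
  shows "2*n < (d+1) * (d+2)"
proof -
  have "sqrt (2 * real n) < real d + 1"
    unfolding d_def by linarith
  then have "(sqrt (2 * real n))^2 < (real d + 1)^2"
    by (intro power_strict_mono) auto
  then have "2 * real n < (real d + 1)^2"
    by simp
  also have "\<dots> \<le> (real d + 1) * (real d + 2)"
    by (simp add: power2_eq_square)
  also have "\<dots> = real ((d+1) * (d+2))"
    by (simp add: algebra_simps)
  finally have "real (2*n) < real ((d+1) * (d+2))"
    by simp
  then show ?thesis
    by (simp only: of_nat_less_iff)
qed

lemma ramsey_bound_le_powr:
  fixes n d :: nat
  assumes "1 \<le> n" "real d \<le> sqrt (2 * real n)"
  shows "real (2 * (n + d * (2*n)) + 2) \<le> 10 * real n powr (3/2)"
proof -
  have "sqrt 2 \<le> 3/2"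
    by (rule real_le_lsqrt) (simp_all add: power2_eq_square)
  then have "sqrt (2 * real n) \<le> 3/2 * sqrt (real n)"
    using mult_right_mono[of "sqrt 2" "3/2" "sqrt (real n)"] by (simp add: real_sqrt_mult)
  then have "4 * real n * real d \<le> 4 * real n * (3/2 * sqrt (real n))"
    using assms(2) by (intro mult_left_mono) auto
  moreover have "4 * real n \<le> 4 * (real n * sqrt (real n))"
    using assms(1) by simp
  moreover have "2 \<le> 2 * real n"
    using assms(1) by simp
  moreover have "real (2 * (n + d * (2*n)) + 2) = 2 + 2 * real n + 4 * real n * real d"
    by (simp add: algebra_simps)
  ultimately have "real (2 * (n + d * (2*n)) + 2) \<le> 10 * (real n * sqrt (real n))"
    by linarith
  also have "real n * sqrt (real n) = real n powr (1 + 1/2)"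
    by (simp only: powr_add) (simp add: powr_half_sqrt)
  also have "(1 + 1/2 :: real) = 3/2"
    by simp
  finally show ?thesis .
qed

theorem theorem1p2:
  shows "\<exists>C::real. C > 0 \<and> (\<exists>n0::nat. \<forall>n\<ge>n0. \<forall>(V::nat set) E (V'::nat set) E'.
     gen_hedgehog V E \<and> card V = n \<and> gen_hedgehog V' E' \<and> card V' = n \<longrightarrow>
     real (ramsey3 V E V' E') \<le> C * real n powr (3/2))"
proof (intro exI conjI allI impI)
  fix n :: nat and V :: "nat set" and E and V' :: "nat set" and E'
  assume "1 \<le> n" and hh: "gen_hedgehog V E \<and> card V = n \<and> gen_hedgehog V' E' \<and> card V' = n"
  define d where "d = nat \<lfloor>sqrt (2 * real n)\<rfloor>"
  have "2*n < (d+1) * (d+2)"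
    unfolding d_def by (rule floor_sqrt_degeneracy)
  then have "ramsey3 V E V' E' \<le> 2 * (n + d * (2*n)) + 2"
    using hh \<open>1 \<le> n\<close> by (intro ramsey3_gen_hedgehogs_le) auto
  then have "real (ramsey3 V E V' E') \<le> real (2 * (n + d * (2*n)) + 2)"
    by (simp only: of_nat_le_iff)
  also have "\<dots> \<le> 10 * real n powr (3/2)"
    by (rule ramsey_bound_le_powr[OF \<open>1 \<le> n\<close>]) (simp add: d_def)
  finally show "real (ramsey3 V E V' E') \<le> 10 * real n powr (3/2)" .
qed simp

end
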